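(* Let $n\ge 1$, $h=1/(2n)$. Consider a fine grid on $\Omega^f=[0,1]\times[0,1]$ with points $(x^f_i,y^f_j)=((i-1)h,(j-1)h)$, $i=1,\dots,2n$ (periodic in $x$), where the row $j=1$ lies on the interface $\Gamma=\{y=0\}$ and $j=0$ is a row of ghost points; and a coarse grid on $\Omega^c=[0,1]\times[-1,0]$ with points $(x^c_i,y^c_j)=(2(i-1)h,2(j-n)h)$, $i=1,\dots,n$ (periodic in $x$), where the row $j=n$ lies on $\Gamma$ and $j=n+1$ is a row of ghost points. Let $(\cdot,\cdot)_h$ and $(\cdot,\cdot)_{2h}$ be the weighted inner products for grid functions (without ghost points) on the fine and coarse grids, $(\boldsymbol u,\boldsymbol v)_h=h^2\sum_{i}\sum_{j} w^f_j u_{ij}v_{ij}$, $(\boldsymbol u,\boldsymbol v)_{2h}=(2h)^2\sum_i\sum_j w^c_j u_{ij}v_{ij}$ with weights $w^f_j,w^c_j>0$, and let the interface inner products be $\langle \boldsymbol u_\Gamma,\boldsymbol v_\Gamma\rangle_h=h\sum_{i=1}^{2n}u_iv_i$ on the fine interface and $\langle \boldsymbol u_\Gamma,\boldsymbol v_\Gamma\rangle_{2h}=2h\sum_{i=1}^{n}u_iv_i$ on the coarse interface. For a grid function $\boldsymbol u$, $\boldsymbol u_\Gamma$ denotes its restriction to the interface row. Assume linear difference operators $\widetilde G_f(\mu)$ (acting on fine grid functions $\widetilde{\boldsymbol v}$ including ghost points, with values at the non-ghost fine grid points) and $\widetilde G_c(\mu)$ (analogously on the coarse grid), and linear maps $\widetilde{\boldsymbol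 v}\mapsto \widetilde{\boldsymbol v}'_\Gamma$ producing interface grid functions (of length $2n$ on the fine side and $n$ on the coarse side), satisfying the summation-by-parts identities $(\boldsymbol u,\widetilde G_f(\mu)\widetilde{\boldsymbol v})_h=-S_f(\boldsymbol u,\boldsymbol v)-\langle \boldsymbol u_\Gamma,\widetilde{\boldsymbol v}'_\Gamma\rangle_h$ for all fine grid functions $\boldsymbol u$ and $\widetilde{\boldsymbol v}$ (with $\boldsymbol v$ the restriction of $\widetilde{\boldsymbol v}$ to non-ghost points), and $(\boldsymbol u,\widetilde G_c(\mu)\widetilde{\boldsymbol v})_{2h}=-S_c(\boldsymbol u,\boldsymbol v)+\langle \boldsymbol u_\Gamma,\widetilde{\boldsymbol v}'_\Gamma\rangle_{2h}$ for all coarse grid functions, where $S_f$ and $S_c$ are symmetric positive semi-definite bilinear forms. Let $\boldsymbol{\rho}^f,\boldsymbol{\rho}^c$ be diagonal matrices with positive diagonal entries, let $\mathcal P$ be a linear (interpolation) map from coarse interface grid functions ($\mathbb R^n$) to fine interface grid functions ($\mathbb R^{2n}$), and $\mathcal R$ a linear (restriction) map from $\mathbb R^{2n}$ to $\mathbb R^n$. Consider smooth time-dependent grid functions $\widetilde{\boldsymbol f}(t)$, $\widetilde{\boldsymbol c}(t)$ satisfying the semi-discretization $\boldsymbol{\rho}^f\boldsymbol f_{tt}=\widetilde G_f(\mu)\widetilde{\boldsymbol f}$, $\boldsymbol{\rho}^c\boldsymbol c_{tt}=\widetilde G_c(\mu)\widetilde{\boldsymbol c}$, together with the interface conditions $\boldsymbol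 f_\Gamma=\mathcal P\boldsymbol c_\Gamma$ and $\widetilde{\boldsymbol c}'_\Gamma=\mathcal R\widetilde{\boldsymbol f}'_\Gamma$ for all $t$. If the interpolation and restriction operators are compatible in the sense $\mathcal P=2\mathcal R^T$ (as matrices), then $\frac{d}{dt}\left[(\boldsymbol f_t,\boldsymbol{\rho}^f\boldsymbol f_t)_h+S_f(\boldsymbol f,\boldsymbol f)+(\boldsymbol c_t,\boldsymbol{\rho}^c\boldsymbol c_t)_{2h}+S_c(\boldsymbol c,\boldsymbol c)\right]=0.$
   Context: This is a semi-discretization of the acoustic wave equation $\rho F_{tt}=\nabla\cdot(\mu\nabla F)$ on a fine domain and $\rho C_{tt}=\nabla\cdot(\mu\nabla C)$ on a coarse domain, coupled by continuity of the solution and of the normal flux $\mu\,\partial_y$ across the interface $y=0$, with a 1:2 mesh refinement and periodic boundary conditions in $x$; contributions from the outer boundaries ($y=1$, $y=-1$) are not included, as encoded in the assumed summation-by-parts identities. Tilde denotes grid functions/operators that involve ghost points; $\boldsymbol f,\boldsymbol c$ denote the restrictions of $\widetilde{\boldsymbol f},\widetilde{\boldsymbol c}$ to the non-ghost grid points. In the paper, $\widetilde{\boldsymbol v}'_\Gamma$ has $i$-th entry $\mu_{i,1}\widetilde{\boldsymbol b}_1^T\widetilde{\boldsymbol v}_{i,:}$, a boundary difference approximation of $\mu\,\partial v/\partial y$ at the interface using the ghost point. *)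

theory Defs
  imports "HOL-Analysis.Analysis"
begin

type_synonym grid = "nat \<Rightarrow> nat \<Rightarrow> real"

definition hsz :: "nat \<Rightarrow> real" where "hsz n = 1 / (2 * real n)"

definition fine_pts :: "nat \<Rightarrow> (nat \<times> nat) set" where
  "fine_pts n = {1..2*n} \<times> {1..2*n+1}"
definition fine_pts_ghost :: "nat \<Rightarrow> (nat \<times> nat) set" where
  "fine_pts_ghost n = {1..2*n} \<times> {0..2*n+1}"

definition coarse_pts :: "nat \<Rightarrow> (nat \<times> nat) set" where
  "coarse_pts n = {1..n} \<times> {0..n}"
definition coarse_pts_ghost :: "nat \<Rightarrow> (nat \<times> nat) set" where
  "coarse_pts_ghost n = {1..n} \<times> {0..n+1}"

definition restr :: "(nat \<times> nat) set \<Rightarrow> grid \<Rightarrow> grid" where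
  "restr A u = (\<lambda>i j. if (i, j) \<in> A then u i j else 0)"

definition gamma_f :: "grid \<Rightarrow> nat \<Rightarrow> real" where
  "gamma_f u = (\<lambda>i. u i 1)"
definition gamma_c :: "nat \<Rightarrow> grid \<Rightarrow> nat \<Rightarrow> real" where
  "gamma_c n u = (\<lambda>i. u i n)"

definition ip_f :: "nat \<Rightarrow> (nat \<Rightarrow> real) \<Rightarrow> grid \<Rightarrow> grid \<Rightarrow> real" where
  "ip_f n wtf u v = (hsz n)^2 * (\<Sum>i=1..2*n. \<Sum>j=1..2*n+1. wtf j * u i j * v i j)"
definition ip_c :: "nat \<Rightarrow> (nat \<Rightarrow> real) \<Rightarrow> grid \<Rightarrow> grid \<Rightarrow> real" where
  "ip_c n wtc u v = (2 * hsz n)^2 * (\<Sum>i=1..n. \<Sum>j=0..n. wtc j * u i j * v i j)"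

definition ipG_f :: "nat \<Rightarrow> (nat \<Rightarrow> real) \<Rightarrow> (nat \<Rightarrow> real) \<Rightarrow> real" where
  "ipG_f n u v = hsz n * (\<Sum>i=1..2*n. u i * v i)"
definition ipG_c :: "nat \<Rightarrow> (nat \<Rightarrow> real) \<Rightarrow> (nat \<Rightarrow> real) \<Rightarrow> real" where
  "ipG_c n u v = 2 * hsz n * (\<Sum>i=1..n. u i * v i)"

definition sym_psd_bilinear :: "(grid \<Rightarrow> grid \<Rightarrow> real) \<Rightarrow> bool" where
  "sym_psd_bilinear S \<longleftrightarrow>
     (\<forall>a b u v w. S (\<lambda>i j. a * u i j + b * v i j) w = a * S u w + b * S v w) \<and>
     (\<forall>u v. S u v = S v u) \<and> (\<forall>u. 0 \<le> S u u)"

definition lin_grid_op :: "(nat \<times> nat) set \<Rightarrow> (grid \<Rightarrow> grid) \<Rightarrow> bool" where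
  "lin_grid_op A G \<longleftrightarrow> (\<forall>a b u v. \<forall>(i, j) \<in> A.
      G (\<lambda>i j. a * u i j + b * v i j) i j = a * G u i j + b * G v i j)"

definition lin_iface_map :: "nat \<Rightarrow> (grid \<Rightarrow> nat \<Rightarrow> real) \<Rightarrow> bool" where
  "lin_iface_map m D \<longleftrightarrow> (\<forall>a b u v. \<forall>i \<in> {1..m}.
      D (\<lambda>i j. a * u i j + b * v i j) i = a * D u i + b * D v i)"

end

theory Submission imports Defs begin

(* Differentiating the energy and substituting the scheme gives 2(f_t, G_f f)_h + 2 S_f(f_t, f) on the
   fine side, which summation by parts reduces to the interface term -2<f_t, f'>_h; likewise the coarse
   side leaves +2<c_t, c'>_2h. Differentiating the interface condition gives f_t = P c_t on the
   interface, and since P = 2 R^T the interpolation and restriction are adjoint with respect to the two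
   interface inner products, <P v, x>_h = <v, R x>_2h, so the two interface terms cancel. *)

definition unit_grid :: "nat \<times> nat \<Rightarrow> grid" where
  "unit_grid p = (\<lambda>i j. if (i, j) = p then 1 else 0)"

lemma sym_psd_bilinear_zero_left:
  assumes "sym_psd_bilinear S"
  shows "S (\<lambda>i j. 0) w = 0"
proof -
  have "S (\<lambda>i j. 0 * w i j + 0 * w i j) w = 0 * S w w + 0 * S w w"
    using assms unfolding sym_psd_bilinear_def by blast
  then show ?thesis by simp
qed

lemma sym_psd_bilinear_restr_left:
  assumes S: "sym_psd_bilinear S" and "finite A"
  shows "S (restr A u) w = (\<Sum>p\<in>A. u (fst p) (snd p) * S (unit_grid p) w)"
  using \<open>finite A\<close>
proof (induction A rule: finite_induct)
  case empty
  have "restr {} u = (\<lambda>i j. 0)" by (auto simp: restr_def)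
  then show ?case using sym_psd_bilinear_zero_left[OF S] by simp
next
  case (insert p A)
  have "restr (insert p A) u = (\<lambda>i j. 1 * restr A u i j + u (fst p) (snd p) * unit_grid p i j)"
    using insert.hyps(2) by (cases p) (auto simp: restr_def unit_grid_def fun_eq_iff)
  then have "S (restr (insert p A) u) w = 1 * S (restr A u) w + u (fst p) (snd p) * S (unit_grid p) w"
    using S unfolding sym_psd_bilinear_def by presburger
  then show ?case using insert by simp
qed

lemma sym_psd_bilinear_restr:
  assumes S: "sym_psd_bilinear S" and A: "finite A"
  shows "S (restr A u) (restr A v) =
     (\<Sum>p\<in>A. \<Sum>q\<in>A. u (fst p) (snd p) * v (fst q) (snd q) * S (unit_grid p) (unit_grid q))"
proof -
  have sym: "\<And>x y. S x y = S y x" using S unfolding sym_psd_bilinear_def by blast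
  have "S (unit_grid p) (restr A v) = (\<Sum>q\<in>A. v (fst q) (snd q) * S (unit_grid p) (unit_grid q))" for p
    using sym_psd_bilinear_restr_left[OF S A, of v "unit_grid p"] by (simp add: sym)
  then show ?thesis
    by (simp add: sym_psd_bilinear_restr_left[OF S A] sum_distrib_left mult.assoc)
qed

lemma has_real_derivative_sym_psd_bilinear_diag:
  assumes S: "sym_psd_bilinear S" and A: "finite A"
    and d: "\<forall>(i, j)\<in>A. ((\<lambda>s. g s i j) has_real_derivative g' i j) (at t)"
  shows "((\<lambda>s. S (restr A (g s)) (restr A (g s))) has_real_derivative
            2 * S (restr A g') (restr A (g t))) (at t)"
proof -
  have sym: "\<And>x y. S x y = S y x" using S unfolding sym_psd_bilinear_def by blast
  have d': "((\<lambda>s. g s (fst p) (snd p)) has_real_derivative g' (fst p) (snd p)) (at t)" if "p \<in> A" for p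
    using d that by auto
  have "((\<lambda>s. \<Sum>p\<in>A. \<Sum>q\<in>A. g s (fst p) (snd p) * g s (fst q) (snd q) * S (unit_grid p) (unit_grid q))
     has_real_derivative (\<Sum>p\<in>A. \<Sum>q\<in>A. (g' (fst p) (snd p) * g t (fst q) (snd q)
         + g t (fst p) (snd p) * g' (fst q) (snd q)) * S (unit_grid p) (unit_grid q))) (at t)"
  proof (intro DERIV_sum DERIV_cmult_right)
    fix p q assume "p \<in> A" "q \<in> A"
    then show "((\<lambda>s. g s (fst p) (snd p) * g s (fst q) (snd q)) has_real_derivative
        g' (fst p) (snd p) * g t (fst q) (snd q) + g t (fst p) (snd p) * g' (fst q) (snd q)) (at t)"
      using DERIV_mult[OF d' d'] by (simp add: mult.commute)
  qed
  also have "(\<Sum>p\<in>A. \<Sum>q\<in>A. (g' (fst p) (snd p) * g t (fst q) (snd q)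
         + g t (fst p) (snd p) * g' (fst q) (snd q)) * S (unit_grid p) (unit_grid q))
     = S (restr A g') (restr A (g t)) + S (restr A (g t)) (restr A g')"
    by (simp add: sym_psd_bilinear_restr[OF S A] algebra_simps sum.distrib)
  also have "\<dots> = 2 * S (restr A g') (restr A (g t))" using sym by simp
  finally show ?thesis by (simp add: sym_psd_bilinear_restr[OF S A])
qed

lemma has_real_derivative_weighted_kinetic:
  fixes g :: "real \<Rightarrow> grid" and w :: "nat \<Rightarrow> real" and rho :: grid
  assumes d: "\<And>i j. i \<in> I \<Longrightarrow> j \<in> J \<Longrightarrow> ((\<lambda>s. g s i j) has_real_derivative g' i j) (at t)"
  shows "((\<lambda>s. \<Sum>i\<in>I. \<Sum>j\<in>J. w j * g s i j * (rho i j * g s i j)) has_real_derivative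
            2 * (\<Sum>i\<in>I. \<Sum>j\<in>J. w j * g t i j * (rho i j * g' i j))) (at t)"
  unfolding sum_distrib_left
proof (intro DERIV_sum)
  fix i j assume "i \<in> I" "j \<in> J"
  then have dij: "((\<lambda>s. g s i j) has_real_derivative g' i j) (at t)" by (rule d)
  show "((\<lambda>s. w j * g s i j * (rho i j * g s i j)) has_real_derivative
      2 * (w j * g t i j * (rho i j * g' i j))) (at t)"
    using DERIV_cmult[OF DERIV_mult[OF dij dij], of "w j * rho i j"] by (simp add: algebra_simps)
qed

lemma fine_energy_rate:
  assumes S: "sym_psd_bilinear S"
    and sbp: "\<forall>x y. ip_f n w x (G y) =
                 - S (restr (fine_pts n) x) (restr (fine_pts n) y) - ipG_f n (gamma_f x) (D y)"
    and d1: "\<forall>(i, j)\<in>fine_pts n. ((\<lambda>s. u s i j) has_real_derivative u' t i j) (at t)"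
    and d2: "\<forall>(i, j)\<in>fine_pts n. ((\<lambda>s. u' s i j) has_real_derivative u'' i j) (at t)"
    and scheme: "\<forall>(i, j)\<in>fine_pts n. rho i j * u'' i j = G (u t) i j"
  shows "((\<lambda>s. ip_f n w (u' s) (\<lambda>i j. rho i j * u' s i j)
                + S (restr (fine_pts n) (u s)) (restr (fine_pts n) (u s)))
           has_real_derivative - 2 * ipG_f n (gamma_f (u' t)) (D (u t))) (at t)"
proof -
  have "((\<lambda>s. ip_f n w (u' s) (\<lambda>i j. rho i j * u' s i j)) has_real_derivative
      (hsz n)^2 * (2 * (\<Sum>i=1..2*n. \<Sum>j=1..2*n+1. w j * u' t i j * (rho i j * u'' i j)))) (at t)"
    unfolding ip_f_def
    by (intro DERIV_cmult has_real_derivative_weighted_kinetic) (use d2 in \<open>auto simp: fine_pts_def\<close>)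
  moreover have "(\<Sum>i=1..2*n. \<Sum>j=1..2*n+1. w j * u' t i j * (rho i j * u'' i j))
      = (\<Sum>i=1..2*n. \<Sum>j=1..2*n+1. w j * u' t i j * G (u t) i j)"
    using scheme by (auto simp: fine_pts_def intro!: sum.cong)
  ultimately have kinetic: "((\<lambda>s. ip_f n w (u' s) (\<lambda>i j. rho i j * u' s i j)) has_real_derivative
      2 * ip_f n w (u' t) (G (u t))) (at t)"
    by (simp add: ip_f_def mult.left_commute)
  have finite: "finite (fine_pts n)" by (simp add: fine_pts_def)
  show ?thesis
    using DERIV_add[OF kinetic has_real_derivative_sym_psd_bilinear_diag[OF S finite d1]] sbp by simp
qed

lemma coarse_energy_rate:
  assumes S: "sym_psd_bilinear S"
    and sbp: "\<forall>x y. ip_c n w x (G y) =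
                 - S (restr (coarse_pts n) x) (restr (coarse_pts n) y) + ipG_c n (gamma_c n x) (D y)"
    and d1: "\<forall>(i, j)\<in>coarse_pts n. ((\<lambda>s. u s i j) has_real_derivative u' t i j) (at t)"
    and d2: "\<forall>(i, j)\<in>coarse_pts n. ((\<lambda>s. u' s i j) has_real_derivative u'' i j) (at t)"
    and scheme: "\<forall>(i, j)\<in>coarse_pts n. rho i j * u'' i j = G (u t) i j"
  shows "((\<lambda>s. ip_c n w (u' s) (\<lambda>i j. rho i j * u' s i j)
                + S (restr (coarse_pts n) (u s)) (restr (coarse_pts n) (u s)))
           has_real_derivative 2 * ipG_c n (gamma_c n (u' t)) (D (u t))) (at t)"
proof -
  have "((\<lambda>s. ip_c n w (u' s) (\<lambda>i j. rho i j * u' s i j)) has_real_derivative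
      (2 * hsz n)^2 * (2 * (\<Sum>i=1..n. \<Sum>j=0..n. w j * u' t i j * (rho i j * u'' i j)))) (at t)"
    unfolding ip_c_def
    by (intro DERIV_cmult has_real_derivative_weighted_kinetic) (use d2 in \<open>auto simp: coarse_pts_def\<close>)
  moreover have "(\<Sum>i=1..n. \<Sum>j=0..n. w j * u' t i j * (rho i j * u'' i j))
      = (\<Sum>i=1..n. \<Sum>j=0..n. w j * u' t i j * G (u t) i j)"
    using scheme by (auto simp: coarse_pts_def intro!: sum.cong)
  ultimately have kinetic: "((\<lambda>s. ip_c n w (u' s) (\<lambda>i j. rho i j * u' s i j)) has_real_derivative
      2 * ip_c n w (u' t) (G (u t))) (at t)"
    by (simp add: ip_c_def mult.left_commute)
  have finite: "finite (coarse_pts n)" by (simp add: coarse_pts_def)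
  show ?thesis
    using DERIV_add[OF kinetic has_real_derivative_sym_psd_bilinear_diag[OF S finite d1]] sbp by simp
qed

lemma DERIV_unique_linear_combination:
  assumes rel: "\<And>s. x s = (\<Sum>k\<in>K. a k * y s k)"
    and dx: "(x has_real_derivative x') (at t)"
    and dy: "\<And>k. k \<in> K \<Longrightarrow> ((\<lambda>s. y s k) has_real_derivative y' k) (at t)"
  shows "x' = (\<Sum>k\<in>K. a k * y' k)"
proof -
  have "(x has_real_derivative (\<Sum>k\<in>K. a k * y' k)) (at t)"
    unfolding rel[abs_def] by (intro DERIV_sum DERIV_cmult dy)
  then show ?thesis using dx DERIV_unique by blast
qed

lemma ipG_f_interp_restrict_adjoint:
  assumes interp: "\<forall>i\<in>{1..2*n}. u i = (\<Sum>k=1..n. P i k * v k)"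
    and restrict: "\<forall>k\<in>{1..n}. y k = (\<Sum>i=1..2*n. R k i * x i)"
    and compat: "\<forall>i\<in>{1..2*n}. \<forall>k\<in>{1..n}. P i k = 2 * R k i"
  shows "ipG_f n u x = ipG_c n v y"
proof -
  have "ipG_f n u x = hsz n * (\<Sum>i=1..2*n. \<Sum>k=1..n. 2 * R k i * v k * x i)"
    unfolding ipG_f_def using interp compat by (auto simp: sum_distrib_right intro!: sum.cong)
  also have "\<dots> = hsz n * (\<Sum>k=1..n. \<Sum>i=1..2*n. 2 * R k i * v k * x i)"
    by (subst sum.swap) (rule refl)
  also have "\<dots> = 2 * hsz n * (\<Sum>k=1..n. v k * y k)"
    using restrict by (simp add: sum_distrib_left mult_ac)
  finally show ?thesis unfolding ipG_c_def .
qed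

lemma interface_velocity:
  assumes iface: "\<forall>s. \<forall>i\<in>I. gamma_f (f s) i = (\<Sum>k\<in>K. P i k * gamma_c n (c s) k)"
    and df: "\<forall>i\<in>I. ((\<lambda>s. f s i 1) has_real_derivative f' i 1) (at t)"
    and dc: "\<forall>k\<in>K. ((\<lambda>s. c s k n) has_real_derivative c' k n) (at t)"
  shows "\<forall>i\<in>I. gamma_f f' i = (\<Sum>k\<in>K. P i k * gamma_c n c' k)"
proof
  fix i assume i: "i \<in> I"
  have "f' i 1 = (\<Sum>k\<in>K. P i k * c' k n)"
  proof (rule DERIV_unique_linear_combination)
    show "f s i 1 = (\<Sum>k\<in>K. P i k * c s k n)" for s
      using iface i by (simp add: gamma_f_def gamma_c_def)
  qed (use df dc i in auto)
  then show "gamma_f f' i = (\<Sum>k\<in>K. P i k * gamma_c n c' k)"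
    by (simp add: gamma_f_def gamma_c_def)
qed

theorem mainTheorem1:
  fixes n :: nat
    and wtf wtc :: "nat \<Rightarrow> real"
    and Gf Gc :: "grid \<Rightarrow> grid"
    and dfG dcG :: "grid \<Rightarrow> nat \<Rightarrow> real"
    and Sf Sc :: "grid \<Rightarrow> grid \<Rightarrow> real"
    and rhof rhoc :: grid
    and P R :: "nat \<Rightarrow> nat \<Rightarrow> real"
    and f f1 f2 c c1 c2 :: "real \<Rightarrow> grid"
  assumes n: "n \<ge> 1"
    and wf_pos: "\<forall>j\<in>{1..2*n+1}. wtf j > 0"
    and wc_pos: "\<forall>j\<in>{0..n}. wtc j > 0"
    and Gf_lin: "lin_grid_op (fine_pts n) Gf"
    and Gc_lin: "lin_grid_op (coarse_pts n) Gc"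
    and dfG_lin: "lin_iface_map (2*n) dfG"
    and dcG_lin: "lin_iface_map n dcG"
    and Sf: "sym_psd_bilinear Sf"
    and Sc: "sym_psd_bilinear Sc"
    and sbp_f: "\<forall>u v. ip_f n wtf u (Gf v) =
                 - Sf (restr (fine_pts n) u) (restr (fine_pts n) v) - ipG_f n (gamma_f u) (dfG v)"
    and sbp_c: "\<forall>u v. ip_c n wtc u (Gc v) =
                 - Sc (restr (coarse_pts n) u) (restr (coarse_pts n) v) + ipG_c n (gamma_c n u) (dcG v)"
    and rhof_pos: "\<forall>(i, j)\<in>fine_pts n. rhof i j > 0"
    and rhoc_pos: "\<forall>(i, j)\<in>coarse_pts n. rhoc i j > 0"
    and f_d1: "\<forall>t. \<forall>(i, j)\<in>fine_pts_ghost n. ((\<lambda>s. f s i j) has_real_derivative f1 t i j) (at t)"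
    and f_d2: "\<forall>t. \<forall>(i, j)\<in>fine_pts_ghost n. ((\<lambda>s. f1 s i j) has_real_derivative f2 t i j) (at t)"
    and c_d1: "\<forall>t. \<forall>(i, j)\<in>coarse_pts_ghost n. ((\<lambda>s. c s i j) has_real_derivative c1 t i j) (at t)"
    and c_d2: "\<forall>t. \<forall>(i, j)\<in>coarse_pts_ghost n. ((\<lambda>s. c1 s i j) has_real_derivative c2 t i j) (at t)"
    and eq_f: "\<forall>t. \<forall>(i, j)\<in>fine_pts n. rhof i j * f2 t i j = Gf (f t) i j"
    and eq_c: "\<forall>t. \<forall>(i, j)\<in>coarse_pts n. rhoc i j * c2 t i j = Gc (c t) i j"
    and iface_sol: "\<forall>t. \<forall>i\<in>{1..2*n}. gamma_f (f t) i = (\<Sum>k=1..n. P i k * gamma_c n (c t) k)"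
    and iface_flux: "\<forall>t. \<forall>k\<in>{1..n}. dcG (c t) k = (\<Sum>i=1..2*n. R k i * dfG (f t) i)"
    and compat: "\<forall>i\<in>{1..2*n}. \<forall>k\<in>{1..n}. P i k = 2 * R k i"
  shows "\<forall>t. ((\<lambda>s. ip_f n wtf (f1 s) (\<lambda>i j. rhof i j * f1 s i j)
                    + Sf (restr (fine_pts n) (f s)) (restr (fine_pts n) (f s))
                    + ip_c n wtc (c1 s) (\<lambda>i j. rhoc i j * c1 s i j)
                    + Sc (restr (coarse_pts n) (c s)) (restr (coarse_pts n) (c s)))
             has_real_derivative 0) (at t)"
proof -
  have fine: "((\<lambda>s. ip_f n wtf (f1 s) (\<lambda>i j. rhof i j * f1 s i j)
                + Sf (restr (fine_pts n) (f s)) (restr (fine_pts n) (f s)))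
           has_real_derivative - 2 * ipG_f n (gamma_f (f1 t)) (dfG (f t))) (at t)" for t
    by (rule fine_energy_rate[OF Sf sbp_f, where u'' = "f2 t"])
      (use f_d1 f_d2 eq_f in \<open>auto simp: fine_pts_def fine_pts_ghost_def\<close>)
  have coarse: "((\<lambda>s. ip_c n wtc (c1 s) (\<lambda>i j. rhoc i j * c1 s i j)
                + Sc (restr (coarse_pts n) (c s)) (restr (coarse_pts n) (c s)))
           has_real_derivative 2 * ipG_c n (gamma_c n (c1 t)) (dcG (c t))) (at t)" for t
    by (rule coarse_energy_rate[OF Sc sbp_c, where u'' = "c2 t"])
      (use c_d1 c_d2 eq_c in \<open>auto simp: coarse_pts_def coarse_pts_ghost_def\<close>)
  have "\<forall>i\<in>{1..2*n}. gamma_f (f1 t) i = (\<Sum>k=1..n. P i k * gamma_c n (c1 t) k)" for t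
    by (rule interface_velocity[OF iface_sol, where t = t])
      (use f_d1 c_d1 in \<open>auto simp: fine_pts_ghost_def coarse_pts_ghost_def\<close>)
  then have "ipG_f n (gamma_f (f1 t)) (dfG (f t)) = ipG_c n (gamma_c n (c1 t)) (dcG (c t))" for t
    using ipG_f_interp_restrict_adjoint[OF _ _ compat] iface_flux by blast
  then show ?thesis
    using DERIV_add[OF fine coarse] by (simp add: add.assoc)
qed

end
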